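(* Every hierarchical probabilistic automaton is leaktight.
   Context: Fix a finite alphabet $A$. A probabilistic automaton is $\mathcal{A}=(Q,q_0,\Delta,F)$ with $Q$ finite, $\Delta:Q\times A\to\mathcal{D}(Q)$. It is hierarchical if there exists a map $\mathrm{rank}:Q\to\mathbb{N}$ such that for all $a\in A$ and states $s,t$ with $\Delta(s,a)(t)>0$ we have $\mathrm{rank}(s)\le\mathrm{rank}(t)$, and moreover if $\Delta(s,a)(t)>0$, $\Delta(s,a)(t')>0$ and $\mathrm{rank}(s)=\mathrm{rank}(t)=\mathrm{rank}(t')$, then $t=t'$. For $a\in A$ let $M_a(s,t)=\Delta(s,a)(t)$, for $u=a_0\cdots a_{n-1}$ let $M_u=M_{a_0}\cdots M_{a_{n-1}}$ (identity for the empty word), and $\mathbb{P}_{\mathcal{A}}(s\xrightarrow{u}t)=M_u(s,t)$. A nonnegative $Q\times Q$ matrix $M$ is idempotent if $M(s,t)>0\iff M^2(s,t)>0$ for all $s,t$; a word $u$ is idempotent if $M_u$ is. A leak is a sequence $(u_n)$ of idempotent words such that $M_{u_n}$ converges to an idempotent matrix $M$ and there exist states $r,q$, both recurrent in the Markov chain with transition matrix $M$, with $\lim_n\mathbb{P}_{\mathcal{A}}(r\xrightarrow{u_n}q)=0$ and $\mathbb{P}_{\mathcal{A}}(r\xrightarrow{u_n}q)>0$ for all $n$. $\mathcal{A}$ is leaktight if it has no leak. *)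

theory Defs
  imports "HOL-Probability.Probability"
begin

record ('q, 'a) prob_automaton =
  pa_init  :: 'q
  pa_trans :: "'q \<Rightarrow> 'a \<Rightarrow> 'q pmf"
  pa_final :: "'q set"

type_synonym 'q qmat = "'q \<Rightarrow> 'q \<Rightarrow> real"

definition mat_mult :: "('q::finite) qmat \<Rightarrow> 'q qmat \<Rightarrow> 'q qmat" where
  "mat_mult M N = (\<lambda>s t. \<Sum>r\<in>UNIV. M s r * N r t)"

definition mat_id :: "'q qmat" where
  "mat_id = (\<lambda>s t. if s = t then 1 else 0)"

definition letter_mat :: "('q, 'a) prob_automaton \<Rightarrow> 'a \<Rightarrow> 'q qmat" where
  "letter_mat A a = (\<lambda>s t. pmf (pa_trans A s a) t)"

fun word_mat :: "('q::finite, 'a) prob_automaton \<Rightarrow> 'a list \<Rightarrow> 'q qmat" where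
  "word_mat A [] = mat_id"
| "word_mat A (a # u) = mat_mult (letter_mat A a) (word_mat A u)"

definition hierarchical :: "('q, 'a) prob_automaton \<Rightarrow> bool" where
  "hierarchical A \<longleftrightarrow> (\<exists>rank :: 'q \<Rightarrow> nat.
     (\<forall>a s t. pmf (pa_trans A s a) t > 0 \<longrightarrow> rank s \<le> rank t) \<and>
     (\<forall>a s t t'. pmf (pa_trans A s a) t > 0 \<and> pmf (pa_trans A s a) t' > 0 \<and>
        rank s = rank t \<and> rank s = rank t' \<longrightarrow> t = t'))"

definition idempotent_mat :: "('q::finite) qmat \<Rightarrow> bool" where
  "idempotent_mat M \<longleftrightarrow> (\<forall>s t. M s t > 0 \<longleftrightarrow> mat_mult M M s t > 0)"

definition recurrent :: "'q qmat \<Rightarrow> 'q \<Rightarrow> bool" where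
  "recurrent M s \<longleftrightarrow> (\<forall>t. (s, t) \<in> {(x, y). M x y > 0}\<^sup>* \<longrightarrow> (t, s) \<in> {(x, y). M x y > 0}\<^sup>*)"

definition is_leak :: "('q::finite, 'a) prob_automaton \<Rightarrow> (nat \<Rightarrow> 'a list) \<Rightarrow> bool" where
  "is_leak A u \<longleftrightarrow>
     (\<forall>n. idempotent_mat (word_mat A (u n))) \<and>
     (\<exists>M. (\<forall>s t. (\<lambda>n. word_mat A (u n) s t) \<longlonglongrightarrow> M s t) \<and> idempotent_mat M \<and>
        (\<exists>r q. recurrent M r \<and> recurrent M q \<and>
           (\<lambda>n. word_mat A (u n) r q) \<longlonglongrightarrow> 0 \<and>
           (\<forall>n. word_mat A (u n) r q > 0)))"

definition leaktight :: "('q::finite, 'a) prob_automaton \<Rightarrow> bool" where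
  "leaktight A \<longleftrightarrow> \<not> (\<exists>u. is_leak A u)"

end

theory Submission
  imports Defs
begin

text \<open>Let c < 1 be the largest transition probability different from 1. Along any word, a
  state s of a hierarchical automaton either moves deterministically to a single state, or keeps
  at most mass c in its own rank: the only way to stay in the rank of s is to follow the unique
  same-rank successor, and a proper random step costs a factor c while leaving the rank is
  irreversible. If M is a limit of word matrices and r is recurrent for M, then all of the mass
  of the row of r in M lies in the rank of r, so eventually the words map r deterministically to
  a single state t. An entry r, q that tends to 0 must then have q \<noteq> t and hence be 0
  eventually, so it cannot stay positive.\<close>

lemma word_mat_nonneg: "0 \<le> word_mat A u s t"
  by (induction u arbitrary: s)
    (auto simp: mat_id_def mat_mult_def letter_mat_def intro!: sum_nonneg)

lemma word_mat_Cons: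
  "word_mat A (a # u) s t = (\<Sum>x\<in>UNIV. pmf (pa_trans A s a) x * word_mat A u x t)"
  by (simp add: mat_mult_def letter_mat_def)

lemma word_mat_row_sum:
  "(\<Sum>t\<in>UNIV. word_mat (A :: ('q::finite, 'a) prob_automaton) u s t) = 1"
proof (induction u arbitrary: s)
  case Nil
  then show ?case by (simp add: mat_id_def)
next
  case (Cons a u)
  have "(\<Sum>t\<in>UNIV. word_mat A (a # u) s t)
      = (\<Sum>x\<in>UNIV. pmf (pa_trans A s a) x * (\<Sum>t\<in>UNIV. word_mat A u x t))"
    unfolding word_mat.simps mat_mult_def letter_mat_def sum_distrib_left by (rule sum.swap)
  also have "\<dots> = 1"
    using Cons by (simp add: sum_pmf_eq_1)
  finally show ?case .
qed

lemma word_mat_sum_le_1: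
  "(\<Sum>t\<in>T. word_mat (A :: ('q::finite, 'a) prob_automaton) u s t) \<le> 1"
proof -
  have "(\<Sum>t\<in>T. word_mat A u s t) \<le> (\<Sum>t\<in>UNIV. word_mat A u s t)"
    by (intro sum_mono2) (auto simp: word_mat_nonneg)
  then show ?thesis
    by (simp add: word_mat_row_sum)
qed

lemma pmf_eq_0_if_pmf_eq_1:
  assumes "pmf p x = 1" and "y \<noteq> x"
  shows "pmf p y = 0"
proof -
  have "pmf p x + pmf p y = measure_pmf.prob p {x, y}"
    using assms(2) by (simp add: measure_measure_pmf_finite)
  also have "\<dots> \<le> 1"
    by (rule measure_pmf.prob_le_1)
  finally show ?thesis
    using assms(1) pmf_nonneg[of p y] by linarith
qed

lemma word_mat_Cons_if_pmf_eq_1: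
  assumes "pmf (pa_trans A s a) x = 1"
  shows "word_mat A (a # u) s t = word_mat A u x t"
proof -
  have "word_mat A (a # u) s t = (\<Sum>y\<in>{x}. pmf (pa_trans A s a) y * word_mat A u y t)"
    unfolding word_mat_Cons
    by (rule sum.mono_neutral_right) (auto simp: pmf_eq_0_if_pmf_eq_1[OF assms])
  then show ?thesis
    using assms by simp
qed

lemma word_mat_limit_nonneg:
  assumes "(\<lambda>n. word_mat A (u n) s t) \<longlonglongrightarrow> L"
  shows "0 \<le> L"
  using assms by (rule LIMSEQ_le_const) (auto simp: word_mat_nonneg)

lemma word_mat_limit_row_sum:
  fixes A :: "('q::finite, 'a) prob_automaton"
  assumes "\<And>t. (\<lambda>n. word_mat A (u n) s t) \<longlonglongrightarrow> M s t"
  shows "(\<Sum>t\<in>UNIV. M s t) = 1"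
proof -
  have "(\<lambda>n. \<Sum>t\<in>UNIV. word_mat A (u n) s t) \<longlonglongrightarrow> (\<Sum>t\<in>UNIV. M s t)"
    by (intro tendsto_sum assms)
  then show ?thesis
    by (simp add: word_mat_row_sum LIMSEQ_const_iff)
qed

text \<open>The 0 is only there to make the maximum well defined when every transition is
  deterministic.\<close>

definition max_proper_trans_prob :: "('q::finite, 'a::finite) prob_automaton \<Rightarrow> real" where
  "max_proper_trans_prob A =
     Max (insert 0 {p \<in> range (\<lambda>(s, a, t). pmf (pa_trans A s a) t). p < 1})"

lemma finite_proper_trans_probs:
  fixes A :: "('q::finite, 'a::finite) prob_automaton"
  shows "finite {p \<in> range (\<lambda>(s, a, t). pmf (pa_trans A s a) t). p < 1}"
  by simp

lemma max_proper_trans_prob_less_1: "max_proper_trans_prob A < 1"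
  unfolding max_proper_trans_prob_def using finite_proper_trans_probs[of A] by auto

lemma max_proper_trans_prob_nonneg: "0 \<le> max_proper_trans_prob A"
  unfolding max_proper_trans_prob_def using finite_proper_trans_probs[of A] by auto

lemma pmf_le_max_proper_trans_prob:
  assumes "pmf (pa_trans A s a) t \<noteq> 1"
  shows "pmf (pa_trans A s a) t \<le> max_proper_trans_prob A"
proof -
  have "pmf (pa_trans A s a) t < 1"
    using assms pmf_le_1[of "pa_trans A s a" t] by linarith
  then show ?thesis
    unfolding max_proper_trans_prob_def using finite_proper_trans_probs[of A]
    by (intro Max_ge) (auto intro: image_eqI[where x = "(s, a, t)"])
qed

locale ranked_automaton =
  fixes A :: "('q::finite, 'a::finite) prob_automaton" and rank :: "'q \<Rightarrow> nat"
  assumes rank_mono: "0 < pmf (pa_trans A s a) t \<Longrightarrow> rank s \<le> rank t"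
    and same_rank_successor_unique:
      "0 < pmf (pa_trans A s a) t \<Longrightarrow> 0 < pmf (pa_trans A s a) t' \<Longrightarrow>
       rank t = rank s \<Longrightarrow> rank t' = rank s \<Longrightarrow> t = t'"
begin

abbreviation level :: "'q \<Rightarrow> 'q set" where
  "level s \<equiv> {t. rank t = rank s}"

lemma word_mat_pos_rank_mono: "0 < word_mat A u s t \<Longrightarrow> rank s \<le> rank t"
proof (induction u arbitrary: s)
  case Nil
  then show ?case by (simp add: mat_id_def split: if_splits)
next
  case (Cons a u)
  then have "0 < (\<Sum>x\<in>UNIV. pmf (pa_trans A s a) x * word_mat A u x t)"
    by (simp only: word_mat_Cons)
  then obtain x where x: "0 < pmf (pa_trans A s a) x * word_mat A u x t"
    using sum_nonpos[of UNIV "\<lambda>x. pmf (pa_trans A s a) x * word_mat A u x t"]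
    by (meson UNIV_I not_less)
  then have "pmf (pa_trans A s a) x \<noteq> 0" and "word_mat A u x t \<noteq> 0"
    by auto
  then have "0 < pmf (pa_trans A s a) x" and "0 < word_mat A u x t"
    using pmf_nonneg word_mat_nonneg by (simp_all add: order_less_le)
  then show ?case
    using rank_mono[of s a x] Cons.IH[of x] by linarith
qed

lemma word_mat_eq_0_if_rank_less: "rank t < rank s \<Longrightarrow> word_mat A u s t = 0"
  using word_mat_pos_rank_mono[of u s t] word_mat_nonneg[of A u s t] by linarith

lemma level_mass_Cons:
  "(\<Sum>t\<in>level s. word_mat A (a # u) s t)
     = (\<Sum>x\<in>UNIV. pmf (pa_trans A s a) x * (\<Sum>t\<in>level s. word_mat A u x t))"
  unfolding word_mat.simps mat_mult_def letter_mat_def sum_distrib_left by (rule sum.swap)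

lemma level_mass_from_higher_rank: "rank s < rank x \<Longrightarrow> (\<Sum>t\<in>level s. word_mat A u x t) = 0"
  by (simp add: word_mat_eq_0_if_rank_less)

lemma level_mass_le_if_random_step:
  assumes random: "\<And>x. pmf (pa_trans A s a) x \<noteq> 1"
  shows "(\<Sum>t\<in>level s. word_mat A (a # u) s t) \<le> max_proper_trans_prob A"
proof -
  define D where "D = pa_trans A s a"
  define g where "g x = (\<Sum>t\<in>level s. word_mat A u x t)" for x
  obtain x0 where x0: "\<And>x. 0 < pmf D x \<Longrightarrow> rank x = rank s \<Longrightarrow> x = x0"
  proof (cases "\<exists>x. 0 < pmf D x \<and> rank x = rank s")
    case True
    then obtain x1 where "0 < pmf D x1" and "rank x1 = rank s"
      by blast
    then show ?thesis
      using that[of x1] same_rank_successor_unique[of s a _ x1] unfolding D_def by blast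
  qed blast
  have "pmf D x * g x = 0" if "x \<noteq> x0" for x
  proof (cases "0 < pmf D x")
    case True
    then have "rank x \<noteq> rank s"
      using x0 that by blast
    moreover have "rank s \<le> rank x"
      using True rank_mono unfolding D_def by blast
    ultimately have "rank s < rank x"
      by linarith
    then show ?thesis
      unfolding g_def by (simp add: level_mass_from_higher_rank)
  qed (use pmf_nonneg[of D x] in simp)
  have "(\<Sum>t\<in>level s. word_mat A (a # u) s t) = (\<Sum>x\<in>UNIV. pmf D x * g x)"
    unfolding D_def g_def by (rule level_mass_Cons)
  also have "\<dots> = pmf D x0 * g x0"
    using \<open>\<And>x. x \<noteq> x0 \<Longrightarrow> pmf D x * g x = 0\<close>
    by (subst sum.mono_neutral_right[where S = "{x0}"]) auto
  also have "\<dots> \<le> pmf D x0"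
    unfolding g_def by (intro mult_left_le word_mat_sum_le_1 pmf_nonneg)
  also have "\<dots> \<le> max_proper_trans_prob A"
    unfolding D_def using random by (rule pmf_le_max_proper_trans_prob)
  finally show ?thesis .
qed

lemma deterministic_or_level_mass_le:
  "(\<exists>t. word_mat A u s t = 1) \<or> (\<Sum>t\<in>level s. word_mat A u s t) \<le> max_proper_trans_prob A"
proof (induction u arbitrary: s)
  case Nil
  then show ?case by (auto simp: mat_id_def)
next
  case (Cons a u)
  show ?case
  proof (cases "\<exists>x. pmf (pa_trans A s a) x = 1")
    case True
    then obtain x where x: "pmf (pa_trans A s a) x = 1" ..
    then have row: "word_mat A (a # u) s = word_mat A u x"
      by (intro ext word_mat_Cons_if_pmf_eq_1)
    have "rank s \<le> rank x"
      using rank_mono[of s a x] x by simp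
    then consider "rank x = rank s" | "rank s < rank x"
      by linarith
    then show ?thesis
    proof cases
      case 1
      then show ?thesis
        using Cons.IH[of x] unfolding row by simp
    next
      case 2
      then show ?thesis
        using max_proper_trans_prob_nonneg[of A] unfolding row level_mass_from_higher_rank[OF 2]
        by simp
    qed
  next
    case False
    then show ?thesis
      by (intro disjI2 level_mass_le_if_random_step) blast
  qed
qed

context
  fixes u :: "nat \<Rightarrow> 'a list" and M :: "'q qmat"
  assumes word_mat_tendsto: "\<And>s t. (\<lambda>n. word_mat A (u n) s t) \<longlonglongrightarrow> M s t"
begin

lemma limit_pos_rank_mono:
  assumes "0 < M x y"
  shows "rank x \<le> rank y"
proof -
  have "eventually (\<lambda>n. 0 < word_mat A (u n) x y) sequentially"
    using word_mat_tendsto assms by (rule order_tendstoD(1))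
  then obtain n where "0 < word_mat A (u n) x y"
    using eventually_happens' sequentially_bot by blast
  then show ?thesis
    by (rule word_mat_pos_rank_mono)
qed

lemma limit_reachable_rank_mono:
  "(x, y) \<in> {(x, y). 0 < M x y}\<^sup>* \<Longrightarrow> rank x \<le> rank y"
  by (induction rule: rtrancl_induct) (auto dest: limit_pos_rank_mono)

lemma recurrent_limit_row_in_level:
  assumes "recurrent M r" and "0 < M r t"
  shows "rank t = rank r"
proof -
  have "(r, t) \<in> {(x, y). 0 < M x y}\<^sup>*"
    using assms(2) by auto
  moreover from this have "(t, r) \<in> {(x, y). 0 < M x y}\<^sup>*"
    using assms(1) unfolding recurrent_def by blast
  ultimately show ?thesis
    using limit_reachable_rank_mono by (meson order.antisym)
qed

lemma recurrent_level_mass_tendsto_1: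
  assumes "recurrent M r"
  shows "(\<lambda>n. \<Sum>t\<in>level r. word_mat A (u n) r t) \<longlonglongrightarrow> 1"
proof -
  have "(\<Sum>t\<in>level r. M r t) = (\<Sum>t\<in>UNIV. M r t)"
  proof (rule sum.mono_neutral_left)
    show "\<forall>t\<in>UNIV - level r. M r t = 0"
    proof
      fix t
      assume "t \<in> UNIV - level r"
      then have "\<not> 0 < M r t"
        using recurrent_limit_row_in_level[OF assms] by auto
      then show "M r t = 0"
        using word_mat_limit_nonneg[OF word_mat_tendsto[of r t]] by linarith
    qed
  qed auto
  also have "\<dots> = 1"
    using word_mat_tendsto by (rule word_mat_limit_row_sum)
  finally have "(\<Sum>t\<in>level r. M r t) = 1" .
  moreover have "(\<lambda>n. \<Sum>t\<in>level r. word_mat A (u n) r t) \<longlonglongrightarrow> (\<Sum>t\<in>level r. M r t)"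
    by (intro tendsto_sum word_mat_tendsto)
  ultimately show ?thesis
    by simp
qed

lemma recurrent_vanishing_entry_eventually_0:
  assumes "recurrent M r" and "(\<lambda>n. word_mat A (u n) r q) \<longlonglongrightarrow> 0"
  shows "eventually (\<lambda>n. word_mat A (u n) r q = 0) sequentially"
proof -
  have "eventually (\<lambda>n. max_proper_trans_prob A < (\<Sum>t\<in>level r. word_mat A (u n) r t)) sequentially"
    using recurrent_level_mass_tendsto_1[OF assms(1)] max_proper_trans_prob_less_1
    by (rule order_tendstoD(1))
  moreover have "eventually (\<lambda>n. word_mat A (u n) r q < 1) sequentially"
    using assms(2) by (rule order_tendstoD(2)) simp
  ultimately show ?thesis
  proof eventually_elim
    case (elim n)
    then obtain t where t: "word_mat A (u n) r t = 1"
      using deterministic_or_level_mass_le[of "u n" r] by auto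
    with elim have "t \<noteq> q"
      by auto
    then have "word_mat A (u n) r q + word_mat A (u n) r t \<le> 1"
      using word_mat_sum_le_1[of A "u n" r "{q, t}"] by simp
    then show ?case
      using t word_mat_nonneg[of A "u n" r q] by linarith
  qed
qed

end

lemma not_is_leak: "\<not> is_leak A u"
proof
  assume "is_leak A u"
  then obtain M r q where
    tendsto: "\<And>s t. (\<lambda>n. word_mat A (u n) s t) \<longlonglongrightarrow> M s t" and
    "recurrent M r" and "(\<lambda>n. word_mat A (u n) r q) \<longlonglongrightarrow> 0" and
    pos: "\<And>n. 0 < word_mat A (u n) r q"
    unfolding is_leak_def by blast
  then have "eventually (\<lambda>n. word_mat A (u n) r q = 0) sequentially"
    by (intro recurrent_vanishing_entry_eventually_0)
  then obtain N where "\<And>n. N \<le> n \<Longrightarrow> word_mat A (u n) r q = 0"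
    unfolding eventually_sequentially by blast
  then show False
    using pos[of N] by simp
qed

end

lemma hierarchical_imp_ranked_automaton:
  assumes "hierarchical A"
  obtains rank where "ranked_automaton A rank"
  using assms unfolding hierarchical_def ranked_automaton_def by metis

theorem proposition5p5:
  fixes A :: "('q::finite, 'a::finite) prob_automaton"
  assumes "hierarchical A"
  shows "leaktight A"
proof -
  obtain rank where "ranked_automaton A rank"
    using assms by (rule hierarchical_imp_ranked_automaton)
  then show ?thesis
    unfolding leaktight_def using ranked_automaton.not_is_leak by blast
qed

end
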